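(* Consider the repeated Prisoner's Dilemma with $A_1=A_2=\{C,D\}$. Let $k$ be a natural number, let $k_0$ be the largest integer with $k_0^2+k_0\le k$, and let $k_1,k_2,k_3$ be positive integers with $k_1+k_2+k_3=k_0$. Let $\omega_0=k_1\times(D,D)+k_2\times(D,C)+k_3\times(C,C)$ and \[\omega^*=k^3\times(D,D)+\sum_{n=1}^{k}\big(k\times(C,C)+k\times(D,D)\big)+(k+1)\times(C,C)+\sum_{n=1}^{\infty}\omega_0 .\] Then the complexity of $\omega^*$ with respect to player 1 is $k^3+2k^2+1$, and the complexity of $\omega^*$ with respect to player 2 is $k^3+2k^2+k+1$.
   Context: Action pairs are written (action of player 1, action of player 2). The notation $n\times a$ denotes $n$ consecutive repetitions of the action pair $a$, and $+$ (and $\sum$) denotes concatenation of sequences of action pairs; $\sum_{n=1}^\infty\omega_0$ is the infinite periodic repetition of $\omega_0$. A pure automaton of player $i$ is a finite state machine $(Q,f,g,q^* )$ with output function $f:Q\to A_i$, transition function $g:Q\times A_{3-i}\to Q$ and initial state $q^*$: at stage $t$ in state $q^t$ it plays $f(q^t)$ and moves to $g(q^t,a_{3-i}^t)$, where $a_{3-i}^t$ is the other player's action at stage $t$; its size is $|Q|$. An automaton of player $i$ is compatible with a (finite or infinite) sequence of action pairs $\omega$ if, when player $3-i$ plays her coordinates of $\omega$ stage by stage, the automaton outputs player $i$'s coordinates of $\omega$ at every stage. The complexity of $\omega$ with respect to player $i$ is the size of the smallest automaton of player $i$ compatible with $\omega$. *)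

theory Defs
  imports Main
begin

datatype act = C | D

type_synonym apair = "act \<times> act"

definition pl :: "nat \<Rightarrow> apair \<Rightarrow> act" where
  "pl i a = (if i = 1 then fst a else snd a)"

primrec run :: "(nat \<Rightarrow> act \<Rightarrow> nat) \<Rightarrow> nat \<Rightarrow> (nat \<Rightarrow> act) \<Rightarrow> nat \<Rightarrow> nat" where
  "run g q0 b 0 = q0"
| "run g q0 b (Suc t) = g (run g q0 b t) (b t)"

definition is_automaton :: "nat set \<Rightarrow> (nat \<Rightarrow> act) \<Rightarrow> (nat \<Rightarrow> act \<Rightarrow> nat) \<Rightarrow> nat \<Rightarrow> bool" where
  "is_automaton Q f g q0 \<longleftrightarrow> finite Q \<and> q0 \<in> Q \<and> (\<forall>q\<in>Q. \<forall>a. g q a \<in> Q)"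

definition compatible :: "nat \<Rightarrow> (nat \<Rightarrow> act) \<Rightarrow> (nat \<Rightarrow> act \<Rightarrow> nat) \<Rightarrow> nat \<Rightarrow> (nat \<Rightarrow> apair) \<Rightarrow> bool" where
  "compatible i f g q0 \<omega> \<longleftrightarrow>
     (\<forall>t. f (run g q0 (\<lambda>s. pl (3 - i) (\<omega> s)) t) = pl i (\<omega> t))"

definition complexity :: "nat \<Rightarrow> (nat \<Rightarrow> apair) \<Rightarrow> nat" where
  "complexity i \<omega> = (LEAST n. \<exists>Q f g q0. is_automaton Q f g q0 \<and> card Q = n \<and> compatible i f g q0 \<omega>)"

definition prefix_then_cycle :: "apair list \<Rightarrow> apair list \<Rightarrow> nat \<Rightarrow> apair" where
  "prefix_then_cycle p c t = (if t < length p then p ! t else c ! ((t - length p) mod length c))"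

definition omega0 :: "nat \<Rightarrow> nat \<Rightarrow> nat \<Rightarrow> apair list" where
  "omega0 k1 k2 k3 = replicate k1 (D,D) @ replicate k2 (D,C) @ replicate k3 (C,C)"

definition omega_star_prefix :: "nat \<Rightarrow> apair list" where
  "omega_star_prefix k = replicate (k^3) (D,D)
     @ concat (replicate k (replicate k (C,C) @ replicate k (D,D)))
     @ replicate (k+1) (C,C)"

definition omega_star :: "nat \<Rightarrow> nat \<Rightarrow> nat \<Rightarrow> nat \<Rightarrow> nat \<Rightarrow> apair" where
  "omega_star k k1 k2 k3 = prefix_then_cycle (omega_star_prefix k) (omega0 k1 k2 k3)"

end

theory Submission
  imports Defs
begin

text \<open>If, from stages \<open>s < t\<close> on, the opponent's moves in \<open>\<omega>\<^sup>*\<close> agree until player \<open>i\<close>'s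
  moves differ, a compatible automaton of player \<open>i\<close> is in different states at \<open>s\<close> and \<open>t\<close>.
  The prefix of \<open>\<omega>\<^sup>*\<close> up to its final \<open>(C,C)\<close>-block is diagonal, and after each of these
  \<open>k\<^sup>3 + 2k\<^sup>2 + 1\<close> stages a \<open>(D,D)\<close> comes within \<open>k\<close> stages, except that the final block
  shows \<open>k + 1\<close> times \<open>(C,C)\<close>; so these stages are pairwise distinguishable for both players.
  Player 2 also distinguishes the remaining \<open>k\<close> stages of the final block, since the cycle starts
  with \<open>(D,D)\<^sup>k\<^sup>1 (D,C)\<close> while the \<open>(D,D)\<close>-runs of the prefix are longer than \<open>k1\<close>.
  Matching automata follow the prefix and run the remaining stages through suitable prefix states.\<close>

definition distinguishable :: "nat \<Rightarrow> (nat \<Rightarrow> apair) \<Rightarrow> nat \<Rightarrow> nat \<Rightarrow> bool" where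
  "distinguishable i \<omega> s t \<longleftrightarrow>
     (\<exists>j. (\<forall>l<j. pl (3 - i) (\<omega> (s + l)) = pl (3 - i) (\<omega> (t + l)))
          \<and> pl i (\<omega> (s + j)) \<noteq> pl i (\<omega> (t + j)))"

lemma run_in_states: "is_automaton Q f g q0 \<Longrightarrow> run g q0 b t \<in> Q"
  by (induction t) (auto simp: is_automaton_def)

lemma run_shift_eq:
  assumes "run g q0 b s = run g q0 b t" and "\<forall>l<j. b (s + l) = b (t + l)"
  shows "run g q0 b (s + j) = run g q0 b (t + j)"
  using assms by (induction j) auto

lemma compatible_run_distinct:
  assumes "compatible i f g q0 \<omega>" and "distinguishable i \<omega> s t"
  shows "run g q0 (\<lambda>u. pl (3 - i) (\<omega> u)) s \<noteq> run g q0 (\<lambda>u. pl (3 - i) (\<omega> u)) t"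
proof
  let ?b = "\<lambda>u. pl (3 - i) (\<omega> u)"
  assume "run g q0 ?b s = run g q0 ?b t"
  moreover obtain j where "\<forall>l<j. ?b (s + l) = ?b (t + l)" and "pl i (\<omega> (s + j)) \<noteq> pl i (\<omega> (t + j))"
    using assms(2) unfolding distinguishable_def by blast
  ultimately show False
    using run_shift_eq assms(1) unfolding compatible_def by metis
qed

lemma card_ge_if_distinguishable:
  assumes "is_automaton Q f g q0" and "compatible i f g q0 \<omega>"
    and "\<And>s t. s < t \<Longrightarrow> t < N \<Longrightarrow> distinguishable i \<omega> s t"
  shows "N \<le> card Q"
proof -
  let ?r = "run g q0 (\<lambda>u. pl (3 - i) (\<omega> u))"
  have "inj_on ?r {..<N}"
    by (rule inj_onI) (metis assms(2,3) compatible_run_distinct lessThan_iff linorder_neqE_nat)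
  moreover have "?r ` {..<N} \<subseteq> Q" and "finite Q"
    using run_in_states assms(1) unfolding is_automaton_def by blast+
  ultimately show ?thesis
    by (metis card_inj_on_le card_lessThan)
qed

lemma complexity_eqI:
  assumes "is_automaton Q f g q0" and "card Q = N" and "compatible i f g q0 \<omega>"
    and "\<And>s t. s < t \<Longrightarrow> t < N \<Longrightarrow> distinguishable i \<omega> s t"
  shows "complexity i \<omega> = N"
  unfolding complexity_def
proof (rule Least_equality)
  show "\<exists>Q f g q0. is_automaton Q f g q0 \<and> card Q = N \<and> compatible i f g q0 \<omega>"
    using assms(1-3) by blast
qed (use card_ge_if_distinguishable assms(4) in blast)

lemma distinguishable_diagonal:
  assumes diag: "\<And>l. l \<le> L \<Longrightarrow> fst (\<omega> (s + l)) = snd (\<omega> (s + l)) \<and> fst (\<omega> (t + l)) = snd (\<omega> (t + l))"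
    and diff: "\<omega> (s + L) \<noteq> \<omega> (t + L)"
  shows "distinguishable i \<omega> s t"
proof -
  have "\<exists>l. l \<le> L \<and> \<omega> (s + l) \<noteq> \<omega> (t + l)"
    using diff by blast
  then obtain j where j: "j \<le> L" "\<omega> (s + j) \<noteq> \<omega> (t + j)"
    and before: "\<forall>l<j. \<omega> (s + l) = \<omega> (t + l)"
    using exists_least_iff[of "\<lambda>l. l \<le> L \<and> \<omega> (s + l) \<noteq> \<omega> (t + l)"] by fastforce
  have "fst (\<omega> (s + j)) \<noteq> fst (\<omega> (t + j))"
    using j(2) diag[OF j(1)] by (auto intro: prod_eqI)
  then have "pl i (\<omega> (s + j)) \<noteq> pl i (\<omega> (t + j))"
    using diag[OF j(1)] by (simp add: pl_def)
  then show ?thesis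
    unfolding distinguishable_def using before by (intro exI[of _ j] conjI allI impI) auto
qed

lemma compatibleI_trace:
  assumes "\<sigma> 0 = q0"
    and "\<And>t. \<sigma> (Suc t) = g (\<sigma> t) (pl (3 - i) (\<omega> t))"
    and "\<And>t. f (\<sigma> t) = pl i (\<omega> t)"
  shows "compatible i f g q0 \<omega>"
proof -
  have "run g q0 (\<lambda>u. pl (3 - i) (\<omega> u)) t = \<sigma> t" for t
    by (induction t) (simp_all add: assms(1,2))
  then show ?thesis
    unfolding compatible_def by (simp add: assms(3))
qed

lemma compatible_prefix_then_cycle:
  assumes "p \<noteq> []" and "c \<noteq> []" and "\<pi> 0 = q0"
    and path_out: "\<And>t. t < length p \<Longrightarrow> f (\<pi> t) = pl i (p ! t)"
    and path_next: "\<And>t. t < length p \<Longrightarrow>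
      g (\<pi> t) (pl (3 - i) (p ! t)) = (if Suc t = length p then \<gamma> 0 else \<pi> (Suc t))"
    and loop_out: "\<And>j. j < length c \<Longrightarrow> f (\<gamma> j) = pl i (c ! j)"
    and loop_next: "\<And>j. j < length c \<Longrightarrow> g (\<gamma> j) (pl (3 - i) (c ! j)) = \<gamma> (Suc j mod length c)"
  shows "compatible i f g q0 (prefix_then_cycle p c)"
proof (rule compatibleI_trace)
  define \<sigma> where "\<sigma> t = (if t < length p then \<pi> t else \<gamma> ((t - length p) mod length c))" for t
  show "\<sigma> 0 = q0"
    using assms(1,3) by (simp add: \<sigma>_def)
  show "f (\<sigma> t) = pl i (prefix_then_cycle p c t)" for t
    using path_out loop_out assms(2) by (simp add: \<sigma>_def prefix_then_cycle_def)
  show "\<sigma> (Suc t) = g (\<sigma> t) (pl (3 - i) (prefix_then_cycle p c t))" for t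
  proof (cases "t < length p")
    case True
    then show ?thesis
      using path_next[OF True] by (simp add: \<sigma>_def prefix_then_cycle_def)
  next
    case False
    then have "Suc t - length p = Suc (t - length p)"
      by simp
    then show ?thesis
      using False loop_next[of "(t - length p) mod length c"] assms(2)
      by (simp add: \<sigma>_def prefix_then_cycle_def mod_Suc_eq)
  qed
qed

lemma nth_concat_replicate:
  "i < n * length xs \<Longrightarrow> concat (replicate n xs) ! i = xs ! (i mod length xs)"
proof (induction n arbitrary: i)
  case (Suc n)
  then show ?case
    by (cases "i < length xs") (auto simp: nth_append le_mod_geq)
qed simp

definition prefix_pair :: "nat \<Rightarrow> nat \<Rightarrow> apair" where
  "prefix_pair k t =
     (if t < k^3 then (D,D)
      else if t < k^3 + 2*k*k then (if (t - k^3) mod (2*k) < k then (C,C) else (D,D))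
      else (C,C))"

definition cycle_pair :: "nat \<Rightarrow> nat \<Rightarrow> nat \<Rightarrow> apair" where
  "cycle_pair k1 k2 j = (if j < k1 then (D,D) else if j < k1 + k2 then (D,C) else (C,C))"

lemma length_omega_star_prefix: "length (omega_star_prefix k) = k^3 + 2*k*k + k + 1"
  by (simp add: omega_star_prefix_def length_concat sum_list_replicate)

lemma nth_omega_star_prefix:
  assumes "t < k^3 + 2*k*k + k + 1"
  shows "omega_star_prefix k ! t = prefix_pair k t"
proof -
  let ?blk = "replicate k (C,C) @ replicate k (D,D)"
  have len: "length (concat (replicate k ?blk)) = 2*k*k"
    by (simp add: length_concat sum_list_replicate)
  consider "t < k^3" | "k^3 \<le> t" "t < k^3 + 2*k*k" | "k^3 + 2*k*k \<le> t"
    by linarith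
  then show ?thesis
  proof cases
    case 2
    then have "t - k^3 < 2*k*k"
      by arith
    then have idx: "t - k^3 < k * length ?blk"
      by (simp add: algebra_simps)
    from nth_concat_replicate[OF idx]
    have "concat (replicate k ?blk) ! (t - k^3) = ?blk ! ((t - k^3) mod (2*k))"
      by (simp only: length_append length_replicate mult_2)
    moreover have "omega_star_prefix k ! t = concat (replicate k ?blk) ! (t - k^3)"
      using 2 \<open>t - k^3 < 2*k*k\<close> by (simp add: omega_star_prefix_def nth_append len)
    moreover have "(t - k^3) mod (2*k) < 2*k"
      using 2 by (intro mod_less_divisor) (auto intro: Nat.gr0I)
    ultimately show ?thesis
      using 2 by (simp add: nth_append prefix_pair_def)
  next
    case 3
    then have "\<not> t - k^3 < 2*k*k" and "t - (k^3 + 2*k*k) < Suc k"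
      using assms by arith+
    then show ?thesis
      using 3 by (simp add: omega_star_prefix_def nth_append len prefix_pair_def del: replicate_Suc)
  qed (simp add: omega_star_prefix_def nth_append prefix_pair_def)
qed

lemma nth_omega0: "j < k1 + k2 + k3 \<Longrightarrow> omega0 k1 k2 k3 ! j = cycle_pair k1 k2 j"
  by (auto simp: omega0_def nth_append cycle_pair_def)

lemma length_omega0: "length (omega0 k1 k2 k3) = k1 + k2 + k3"
  by (simp add: omega0_def)

lemma omega_star_eq:
  assumes "0 < k1 + k2 + k3"
  shows "omega_star k k1 k2 k3 t =
    (if t < k^3 + 2*k*k + k + 1 then prefix_pair k t
     else cycle_pair k1 k2 ((t - (k^3 + 2*k*k + k + 1)) mod (k1 + k2 + k3)))"
  using assms unfolding omega_star_def prefix_then_cycle_def length_omega_star_prefix length_omega0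
  by (simp add: nth_omega_star_prefix nth_omega0)

lemma prefix_pair_diag: "fst (prefix_pair k t) = snd (prefix_pair k t)"
  by (simp add: prefix_pair_def)

lemma prefix_pair_tail: "k^3 + 2*k*k \<le> t \<Longrightarrow> prefix_pair k t = (C,C)"
  by (simp add: prefix_pair_def)

lemma prefix_pair_D_imp_lt: "prefix_pair k t = (D,D) \<Longrightarrow> t < k^3 + 2*k*k"
  by (auto simp: prefix_pair_def split: if_splits)

lemma prefix_pair_block:
  assumes "q < k" and "j < 2*k"
  shows "prefix_pair k (k^3 + (2*k*q + j)) = (if j < k then (C,C) else (D,D))"
proof -
  have "2*k*(q + 1) \<le> 2*k*k"
    using assms(1) by (intro mult_le_mono2) simp
  then have "2*k*q + j < 2*k*k"
    using assms(2) by (simp add: algebra_simps)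
  moreover have "(2*k*q + j) mod (2*k) = j"
    using assms(2) by simp
  ultimately show ?thesis
    by (simp add: prefix_pair_def)
qed

lemma middle_part_decomp:
  fixes k t :: nat
  assumes "k^3 \<le> t" and "t < k^3 + 2*k*k"
  obtains q j where "q < k" "j < 2*k" "t = k^3 + (2*k*q + j)"
proof
  let ?u = "t - k^3"
  have "?u < k * (2*k)"
    using assms by (simp add: algebra_simps)
  then show "?u div (2*k) < k"
    by (rule less_mult_imp_div_less)
  show "?u mod (2*k) < 2*k"
    using assms by (intro mod_less_divisor) (auto intro: Nat.gr0I)
  show "t = k^3 + (2*k*(?u div (2*k)) + ?u mod (2*k))"
    using assms(1) by simp
qed

text \<open>Every \<open>(C,C)\<close>-run of the middle part lasts \<open>k\<close> stages, so a \<open>(D,D)\<close> comes within \<open>k\<close> stages.\<close>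

lemma prefix_pair_D_within:
  assumes "t < k^3 + 2*k*k"
  shows "\<exists>m\<le>k. prefix_pair k (t + m) = (D,D)"
proof (cases "t < k^3")
  case True
  then show ?thesis
    by (intro exI[of _ 0]) (simp add: prefix_pair_def)
next
  case False
  then obtain q j where q: "q < k" and j: "j < 2*k" and t: "t = k^3 + (2*k*q + j)"
    using assms middle_part_decomp by (metis not_less)
  show ?thesis
  proof (cases "j < k")
    case True
    then have "prefix_pair k (t + (k - j)) = (D,D)"
      using prefix_pair_block[OF q, of k] q by (simp add: t add.assoc)
    then show ?thesis
      by (intro exI[of _ "k - j"]) simp
  next
    case False
    then show ?thesis
      using prefix_pair_block[OF q j] by (intro exI[of _ 0]) (simp add: t)
  qed
qed

lemma prefix_pair_D_run:
  assumes "prefix_pair k t = (C,C)" and "prefix_pair k (Suc t) = (D,D)" and "l < k"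
  shows "prefix_pair k (Suc t + l) = (D,D)"
proof -
  have "k^3 \<le> t" and "Suc t < k^3 + 2*k*k"
    using assms(1,2) by (auto simp: prefix_pair_def split: if_splits)
  then obtain q j where q: "q < k" and j: "j < 2*k" and t: "t = k^3 + (2*k*q + j)"
    using middle_part_decomp by (metis Suc_lessD)
  have "j < k"
    using assms(1) prefix_pair_block[OF q j] by (auto simp: t split: if_splits)
  moreover have "\<not> Suc j < k"
    using assms(2) prefix_pair_block[OF q, of "Suc j"] j by (auto simp: t)
  ultimately have "Suc t + l = k^3 + (2*k*q + (k + l))"
    using t by linarith
  then show ?thesis
    using prefix_pair_block[OF q, of "k + l"] assms(3) by (simp add: add.assoc)
qed

locale omega_star_params =
  fixes k k1 k2 k3 :: nat
  assumes k1: "0 < k1" and k2: "0 < k2" and k3: "0 < k3" and period_lt: "k1 + k2 + k3 < k"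
begin

abbreviation tail_start where "tail_start \<equiv> k^3 + 2*k*k"
abbreviation cycle_start where "cycle_start \<equiv> k^3 + 2*k*k + k + 1"
abbreviation period where "period \<equiv> k1 + k2 + k3"
abbreviation \<omega> where "\<omega> \<equiv> omega_star k k1 k2 k3"

lemma cycle_states_below_tail: "k^3 + k + period < tail_start"
proof -
  have "2*k*1 \<le> 2*k*k"
    using period_lt by (intro mult_le_mono2) simp
  then show ?thesis
    using period_lt by linarith
qed

lemma \<omega>_prefix: "t < cycle_start \<Longrightarrow> \<omega> t = prefix_pair k t"
  using omega_star_eq[of k1 k2 k3 k t] k1 by simp

lemma \<omega>_cycle: "cycle_start \<le> t \<Longrightarrow> \<omega> t = cycle_pair k1 k2 ((t - cycle_start) mod period)"
  using omega_star_eq[of k1 k2 k3 k t] k1 by simp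

lemma \<omega>_after_cycle_start: "l < period \<Longrightarrow> \<omega> (cycle_start + l) = cycle_pair k1 k2 l"
  using \<omega>_cycle[of "cycle_start + l"] by simp

lemma \<omega>_cycle_start: "\<omega> cycle_start = (D,D)"
  using \<omega>_after_cycle_start[of 0] k1 by (simp add: cycle_pair_def)

lemma \<omega>_diag: "t \<le> cycle_start \<Longrightarrow> fst (\<omega> t) = snd (\<omega> t)"
  using \<omega>_cycle_start by (cases "t = cycle_start") (simp_all add: \<omega>_prefix prefix_pair_diag)

lemma first_C_block: "j < k \<Longrightarrow> prefix_pair k (k^3 + j) = (C,C)"
  using prefix_pair_block[of 0 k j] by simp

lemma first_D_block: "j < k \<Longrightarrow> prefix_pair k (k^3 + k + j) = (D,D)"
  using prefix_pair_block[of 0 k "k + j"] by (simp add: add.assoc)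

lemma last_D_block:
  assumes "j < k1"
  shows "prefix_pair k (tail_start - k1 + j) = (D,D)"
proof -
  have eq: "tail_start - k1 + j = k^3 + (2*k*(k - 1) + (2*k - k1 + j))"
    using period_lt assms by (cases k) (auto simp: algebra_simps)
  show ?thesis
    unfolding eq using period_lt assms by (subst prefix_pair_block) auto
qed

lemma prefix_distinguishable:
  assumes "s < t" and "t \<le> tail_start"
  shows "distinguishable i \<omega> s t"
proof -
  have "s + (tail_start - t) < tail_start"
    using assms by simp
  then obtain m where m: "m \<le> k" "prefix_pair k (s + (tail_start - t) + m) = (D,D)"
    using prefix_pair_D_within by blast
  define L where "L = tail_start - t + m"
  have "t + L < cycle_start"
    using assms(2) m(1) by (simp add: L_def)
  show ?thesis
  proof (rule distinguishable_diagonal[where L = L])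
    show "fst (\<omega> (s + l)) = snd (\<omega> (s + l)) \<and> fst (\<omega> (t + l)) = snd (\<omega> (t + l))" if "l \<le> L" for l
      using that \<open>t + L < cycle_start\<close> assms(1) by (simp add: \<omega>_diag)
    have "\<omega> (s + L) = (D,D)"
      using m(2) \<open>t + L < cycle_start\<close> assms(1) by (simp add: \<omega>_prefix L_def add.assoc)
    moreover have "\<omega> (t + L) = (C,C)"
      using \<open>t + L < cycle_start\<close> assms(2) by (simp add: \<omega>_prefix L_def prefix_pair_tail)
    ultimately show "\<omega> (s + L) \<noteq> \<omega> (t + L)"
      by simp
  qed
qed

lemma D_run_vs_cycle_distinguishable:
  assumes t: "t + r = cycle_start"
    and agree: "\<And>l. l < r \<Longrightarrow> \<omega> (s + l) = \<omega> (t + l)"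
    and D_run: "\<And>l. l < k \<Longrightarrow> \<omega> (s + (r + l)) = (D,D)"
  shows "distinguishable 2 \<omega> s t"
proof -
  have cycle: "\<omega> (t + (r + l)) = cycle_pair k1 k2 l" if "l < period" for l
    unfolding add.assoc[symmetric] t using that by (rule \<omega>_after_cycle_start)
  show ?thesis
    unfolding distinguishable_def
  proof (intro exI[of _ "r + k1"] conjI allI impI)
    fix l assume l: "l < r + k1"
    show "pl (3 - 2) (\<omega> (s + l)) = pl (3 - 2) (\<omega> (t + l))"
    proof (cases "l < r")
      case True
      then show ?thesis
        using agree by simp
    next
      case False
      then have "l = r + (l - r)" and "l - r < k1"
        using l by arith+
      then show ?thesis
        using D_run[of "l - r"] cycle[of "l - r"] period_lt by (simp add: pl_def cycle_pair_def)
    qed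
  next
    show "pl 2 (\<omega> (s + (r + k1))) \<noteq> pl 2 (\<omega> (t + (r + k1)))"
      using D_run[of k1] cycle[of k1] period_lt k2 by (simp add: pl_def cycle_pair_def)
  qed
qed

text \<open>A stage \<open>s\<close> that agrees with a later stage of the final \<open>(C,C)\<close>-block up to the cycle is
  at the end of a \<open>(C,C)\<close>-run of the middle part, hence followed by a full \<open>(D,D)\<close>-run.\<close>

lemma final_block_distinguishable:
  assumes "s < t" and "tail_start < t" and "t < cycle_start"
  shows "distinguishable 2 \<omega> s t"
proof -
  define r where "r = cycle_start - t"
  have r: "0 < r" "t + r = cycle_start"
    using assms unfolding r_def by auto
  show ?thesis
  proof (cases "\<exists>L\<le>r. \<omega> (s + L) \<noteq> \<omega> (t + L)")
    case True
    then obtain L where "L \<le> r" and "\<omega> (s + L) \<noteq> \<omega> (t + L)"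
      by blast
    moreover have "s + l \<le> cycle_start" and "t + l \<le> cycle_start" if "l \<le> L" for l
      using that \<open>L \<le> r\<close> r(2) assms(1) by linarith+
    ultimately show ?thesis
      by (intro distinguishable_diagonal[where L = L]) (simp_all add: \<omega>_diag)
  next
    case False
    then have agree: "\<And>l. l \<le> r \<Longrightarrow> \<omega> (s + l) = \<omega> (t + l)"
      by blast
    have "t + (r - 1) < cycle_start" and "tail_start \<le> t + (r - 1)" and "s + (r - 1) < cycle_start"
      using r assms by arith+
    then have "prefix_pair k (s + (r - 1)) = (C,C)"
      using agree[of "r - 1"] by (simp add: \<omega>_prefix prefix_pair_tail)
    moreover have "prefix_pair k (Suc (s + (r - 1))) = (D,D)"
      using agree[of r] r assms(1) \<omega>_cycle_start by (simp add: \<omega>_prefix)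
    ultimately have D_run: "prefix_pair k (s + (r + l)) = (D,D)" if "l < k" for l
      using prefix_pair_D_run[of k "s + (r - 1)" l] that r(1) by (simp add: add.assoc)
    show ?thesis
    proof (rule D_run_vs_cycle_distinguishable[OF r(2)])
      show "\<omega> (s + l) = \<omega> (t + l)" if "l < r" for l
        using that agree by simp
      show "\<omega> (s + (r + l)) = (D,D)" if "l < k" for l
        using D_run[OF that] prefix_pair_D_imp_lt[OF D_run[OF that]] by (simp add: \<omega>_prefix)
    qed
  qed
qed

text \<open>Player 1's automaton: states \<open>0..tail_start\<close> follow the prefix; the final \<open>(C,C)\<close>-block is
  replayed on the first \<open>(C,C)\<close>-block, and the cycle runs through the first \<open>(D,D)\<close>-block, with
  player 2's \<open>C\<close>s in the \<open>(D,C)\<close>-part sending it back into the first \<open>(C,C)\<close>-block.\<close>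

definition f1 :: "nat \<Rightarrow> act" where
  "f1 q = fst (prefix_pair k q)"

definition g1 :: "nat \<Rightarrow> act \<Rightarrow> nat" where
  "g1 q a =
     (if a = f1 q then (if q = tail_start then k^3 else Suc q)
      else if k^3 + k + k1 \<le> q \<and> q < k^3 + k + k1 + k2
      then (if Suc q = k^3 + k + k1 + k2 then k^3 + k - k3 else Suc q)
      else 0)"

definition path1 :: "nat \<Rightarrow> nat" where
  "path1 t = (if t \<le> tail_start then t else k^3 + (t - Suc tail_start))"

definition loop1 :: "nat \<Rightarrow> nat" where
  "loop1 j = (if j < k1 + k2 then k^3 + k + j else k^3 + k + j - period)"

lemma automaton1: "is_automaton {..tail_start} f1 g1 0"
  unfolding is_automaton_def g1_def using cycle_states_below_tail by auto

lemma path1_out: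
  assumes "t < cycle_start"
  shows "f1 (path1 t) = fst (prefix_pair k t)"
proof (cases "t \<le> tail_start")
  case False
  define j where "j = t - Suc tail_start"
  have t: "t = Suc tail_start + j" and "j < k"
    using False assms unfolding j_def by arith+
  show ?thesis
    unfolding t using \<open>j < k\<close> by (simp add: f1_def path1_def first_C_block prefix_pair_tail)
qed (simp add: f1_def path1_def)

lemma loop1_step:
  assumes "j < period"
  shows "f1 (loop1 j) = fst (cycle_pair k1 k2 j)
    \<and> g1 (loop1 j) (snd (cycle_pair k1 k2 j)) = loop1 (Suc j mod period)"
proof -
  have ne: "loop1 j \<noteq> tail_start"
    using assms cycle_states_below_tail by (auto simp: loop1_def)
  consider "j < k1" | "k1 \<le> j" "j < k1 + k2" | "k1 + k2 \<le> j"
    by linarith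
  then show ?thesis
  proof cases
    case 1
    then show ?thesis
      using ne first_D_block[of j] period_lt k2
      by (simp add: f1_def g1_def loop1_def cycle_pair_def add.assoc)
  next
    case 2
    then show ?thesis
      using first_D_block[of j] period_lt k1 k2 k3
      by (auto simp: f1_def g1_def loop1_def cycle_pair_def add.assoc)
  next
    case 3
    have "loop1 j = k^3 + (k + j - period)"
      using 3 assms period_lt by (simp add: loop1_def)
    moreover have "k + j - period < k"
      using assms period_lt by arith
    ultimately show ?thesis
      using 3 ne first_C_block[of "k + j - period"] assms period_lt k1 k2
      by (auto simp: f1_def g1_def loop1_def cycle_pair_def mod_Suc)
  qed
qed

lemma compatible1: "compatible 1 f1 g1 0 \<omega>"
  unfolding omega_star_def
proof (rule compatible_prefix_then_cycle[where \<pi> = path1 and \<gamma> = loop1])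
  fix t assume "t < length (omega_star_prefix k)"
  then have t: "t < cycle_start"
    by (simp add: length_omega_star_prefix)
  show "f1 (path1 t) = pl 1 (omega_star_prefix k ! t)"
    using path1_out[OF t] by (simp add: nth_omega_star_prefix[OF t] pl_def)
  have "g1 (path1 t) (pl (3 - 1) (omega_star_prefix k ! t)) =
      (if path1 t = tail_start then k^3 else Suc (path1 t))"
    using path1_out[OF t] by (simp add: g1_def nth_omega_star_prefix[OF t] pl_def prefix_pair_diag)
  also have "\<dots> = path1 (Suc t)"
    using t cycle_states_below_tail by (auto simp: path1_def)
  also have "path1 (Suc t) = (if Suc t = cycle_start then loop1 0 else path1 (Suc t))"
    using k1 by (simp add: loop1_def path1_def)
  finally show "g1 (path1 t) (pl (3 - 1) (omega_star_prefix k ! t)) =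
      (if Suc t = length (omega_star_prefix k) then loop1 0 else path1 (Suc t))"
    by (simp add: length_omega_star_prefix)
next
  fix j assume "j < length (omega0 k1 k2 k3)"
  then have j: "j < period"
    by (simp add: length_omega0)
  then show "f1 (loop1 j) = pl 1 (omega0 k1 k2 k3 ! j)"
    and "g1 (loop1 j) (pl (3 - 1) (omega0 k1 k2 k3 ! j)) = loop1 (Suc j mod length (omega0 k1 k2 k3))"
    using loop1_step[OF j] by (simp_all add: nth_omega0 pl_def length_omega0)
qed (simp_all add: omega_star_prefix_def omega0_def k1 path1_def)

text \<open>Player 2's automaton: states \<open>0..cycle_start - 1\<close> follow the prefix; the cycle runs through the
  end of the last \<open>(D,D)\<close>-block and then the final \<open>(C,C)\<close>-block, where player 1's \<open>D\<close>s in the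
  \<open>(D,C)\<close>-part lead on to the last \<open>k3\<close> states.\<close>

definition f2 :: "nat \<Rightarrow> act" where
  "f2 q = snd (prefix_pair k q)"

definition g2 :: "nat \<Rightarrow> act \<Rightarrow> nat" where
  "g2 q a =
     (if a = f2 q then (if Suc q = cycle_start then tail_start - k1 else Suc q)
      else if tail_start \<le> q \<and> q < tail_start + k2
      then (if Suc q = tail_start + k2 then cycle_start - k3 else Suc q)
      else 0)"

definition loop2 :: "nat \<Rightarrow> nat" where
  "loop2 j = (if j < k1 then tail_start - k1 + j else if j < k1 + k2 then tail_start + j - k1
              else cycle_start + j - period)"

lemma automaton2: "is_automaton {..<cycle_start} f2 g2 0"
  unfolding is_automaton_def g2_def using period_lt k3 by auto

lemma loop2_step:
  assumes "j < period"
  shows "f2 (loop2 j) = snd (cycle_pair k1 k2 j)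
    \<and> g2 (loop2 j) (fst (cycle_pair k1 k2 j)) = loop2 (Suc j mod period)"
proof -
  consider "j < k1" | "k1 \<le> j" "j < k1 + k2" | "k1 + k2 \<le> j"
    by linarith
  then show ?thesis
  proof cases
    case 1
    have "Suc j mod period = Suc j"
      using 1 k2 by simp
    moreover have "loop2 j = tail_start - k1 + j" and "loop2 (Suc j) = Suc (loop2 j)"
      using 1 k2 cycle_states_below_tail by (auto simp: loop2_def)
    moreover have "Suc (tail_start - k1 + j) < cycle_start"
      using 1 cycle_states_below_tail by arith
    ultimately show ?thesis
      using 1 last_D_block[of j] by (simp add: f2_def g2_def cycle_pair_def)
  next
    case 2
    have "Suc j mod period = Suc j"
      using 2 k3 by simp
    moreover have "loop2 j = tail_start + (j - k1)"
      and "loop2 (Suc j) = (if Suc j = k1 + k2 then cycle_start - k3 else Suc (loop2 j))"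
      using 2 k3 period_lt by (auto simp: loop2_def)
    ultimately show ?thesis
      using 2 by (auto simp: f2_def g2_def cycle_pair_def prefix_pair_tail)
  next
    case 3
    have q: "loop2 j = cycle_start - (period - j)"
      using 3 assms by (simp add: loop2_def)
    have "f2 (loop2 j) = C"
      unfolding q using assms period_lt by (simp add: f2_def prefix_pair_tail)
    moreover have "g2 (loop2 j) C = loop2 (Suc j mod period)"
    proof (cases "Suc j = period")
      case True
      then have "Suc (loop2 j) = cycle_start" and "loop2 (Suc j mod period) = tail_start - k1"
        unfolding q using k1 by (simp_all add: loop2_def)
      then show ?thesis
        using \<open>f2 (loop2 j) = C\<close> by (simp add: g2_def)
    next
      case False
      then have "Suc (loop2 j) \<noteq> cycle_start" and "loop2 (Suc j mod period) = Suc (loop2 j)"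
        unfolding q using 3 assms period_lt by (simp_all add: loop2_def)
      then show ?thesis
        using \<open>f2 (loop2 j) = C\<close> by (simp add: g2_def)
    qed
    ultimately show ?thesis
      using 3 by (simp add: cycle_pair_def)
  qed
qed

lemma compatible2: "compatible 2 f2 g2 0 \<omega>"
  unfolding omega_star_def
proof (rule compatible_prefix_then_cycle[where \<pi> = id and \<gamma> = loop2])
  fix t assume "t < length (omega_star_prefix k)"
  then have t: "t < cycle_start"
    by (simp add: length_omega_star_prefix)
  show "f2 (id t) = pl 2 (omega_star_prefix k ! t)"
    by (simp add: nth_omega_star_prefix[OF t] pl_def f2_def)
  show "g2 (id t) (pl (3 - 2) (omega_star_prefix k ! t)) =
      (if Suc t = length (omega_star_prefix k) then loop2 0 else id (Suc t))"
    using k1 by (simp add: nth_omega_star_prefix[OF t] pl_def g2_def f2_def prefix_pair_diag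
        length_omega_star_prefix loop2_def)
next
  fix j assume "j < length (omega0 k1 k2 k3)"
  then have j: "j < period"
    by (simp add: length_omega0)
  then show "f2 (loop2 j) = pl 2 (omega0 k1 k2 k3 ! j)"
    and "g2 (loop2 j) (pl (3 - 2) (omega0 k1 k2 k3 ! j)) = loop2 (Suc j mod length (omega0 k1 k2 k3))"
    using loop2_step[OF j] by (simp_all add: nth_omega0 pl_def length_omega0)
qed (simp_all add: omega_star_prefix_def omega0_def k1)

theorem omega_star_complexities:
  "complexity 1 \<omega> = k^3 + 2*k^2 + 1 \<and> complexity 2 \<omega> = k^3 + 2*k^2 + k + 1"
proof
  show "complexity 1 \<omega> = k^3 + 2*k^2 + 1"
  proof (rule complexity_eqI[OF automaton1 _ compatible1])
    show "card {..tail_start} = k^3 + 2*k^2 + 1"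
      by (simp add: power2_eq_square)
    show "distinguishable 1 \<omega> s t" if "s < t" "t < k^3 + 2*k^2 + 1" for s t
      using that by (intro prefix_distinguishable) (simp_all add: power2_eq_square)
  qed
  show "complexity 2 \<omega> = k^3 + 2*k^2 + k + 1"
  proof (rule complexity_eqI[OF automaton2 _ compatible2])
    show "card {..<cycle_start} = k^3 + 2*k^2 + k + 1"
      by (simp add: power2_eq_square)
    show "distinguishable 2 \<omega> s t" if "s < t" "t < k^3 + 2*k^2 + k + 1" for s t
    proof (cases "t \<le> tail_start")
      case True
      then show ?thesis
        using that(1) by (intro prefix_distinguishable) simp_all
    next
      case False
      then show ?thesis
        using that by (intro final_block_distinguishable) (simp_all add: power2_eq_square)
    qed
  qed
qed

end

lemma greatest_pronic_le: "(GREATEST m::nat. m^2 + m \<le> k)^2 + (GREATEST m::nat. m^2 + m \<le> k) \<le> k"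
  by (rule GreatestI_nat[of "\<lambda>m. m^2 + m \<le> k" 0 k]) auto

theorem lemma1:
  fixes k k1 k2 k3 :: nat
  assumes "k1 > 0" and "k2 > 0" and "k3 > 0"
    and "k1 + k2 + k3 = (GREATEST m::nat. m^2 + m \<le> k)"
  shows "complexity 1 (omega_star k k1 k2 k3) = k^3 + 2*k^2 + 1
       \<and> complexity 2 (omega_star k k1 k2 k3) = k^3 + 2*k^2 + k + 1"
proof -
  let ?m = "k1 + k2 + k3"
  have "?m^2 + ?m \<le> k"
    using greatest_pronic_le[of k] by (simp only: assms(4))
  moreover have "?m \<le> ?m^2"
    by (simp add: power2_eq_square)
  ultimately have "?m < k"
    using assms(1) by linarith
  then interpret omega_star_params k k1 k2 k3
    using assms(1-3) by unfold_locales
  show ?thesis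
    by (rule omega_star_complexities)
qed

end
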